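(* Let $\alpha_1,\ldots,\alpha_n$ and $\beta_1,\ldots,\beta_n$ be real numbers with $1\ge\alpha_1\ge\cdots\ge\alpha_n\ge 0$ and $1\ge\beta_1\ge\cdots\ge\beta_n\ge 0$. Define probability distributions on $\{0,1\}^n$ by \[ P(x)=\frac{1}{2^n}\prod_{j=1}^n\big(1+(-1)^{x_j}\alpha_j\big),\qquad Q(y)=\frac{1}{2^n}\prod_{j=1}^n\big(1+(-1)^{y_j}\beta_j\big). \] If $\prod_{j=1}^k\alpha_j\le\prod_{j=1}^k\beta_j$ for all $k=1,\ldots,n$, with equality for $k=n$, then $P\prec Q$.
   Context: For probability vectors $P,Q$ with $N$ entries, $P\prec Q$ (majorization) means: sorting entries in non-increasing order $p^\downarrow_1\ge\cdots\ge p^\downarrow_N$, $q^\downarrow_1\ge\cdots\ge q^\downarrow_N$, one has $\sum_{i=1}^k p^\downarrow_i\le\sum_{i=1}^k q^\downarrow_i$ for all $k=1,\ldots,N$, with equality for $k=N$. *)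

theory Defs
  imports Complex_Main
begin

definition majorized :: "real list \<Rightarrow> real list \<Rightarrow> bool" where
  "majorized p q \<longleftrightarrow> length p = length q \<and>
     (\<forall>k \<in> {1..length p}. sum_list (take k (rev (sort p))) \<le> sum_list (take k (rev (sort q)))) \<and>
     sum_list (rev (sort p)) = sum_list (rev (sort q))"

text \<open>Points of {0,1}^n are boolean lists of length n (True stands for 1);
  \<open>List.n_lists n [False, True]\<close> enumerates all of them, each exactly once.\<close>
definition cube_points :: "nat \<Rightarrow> bool list list" where
  "cube_points n = List.n_lists n [False, True]"

text \<open>The product distribution with biases a 0, ..., a (n-1) (paper's alpha_1..alpha_n).\<close>
definition prod_dist :: "nat \<Rightarrow> (nat \<Rightarrow> real) \<Rightarrow> bool list \<Rightarrow> real" where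
  "prod_dist n a x = (1 / 2 ^ n) * (\<Prod>j<n. 1 + (if x ! j then -1 else 1) * a j)"

definition majorized_dist :: "nat \<Rightarrow> (bool list \<Rightarrow> real) \<Rightarrow> (bool list \<Rightarrow> real) \<Rightarrow> bool" where
  "majorized_dist n P Q \<longleftrightarrow> majorized (map P (cube_points n)) (map Q (cube_points n))"

end

theory Submission
  imports Defs "HOL-Library.Multiset" "HOL-Library.FuncSet"
begin

text \<open>
  Majorization of weights on finite sets is used in the order-free form: every \<open>k\<close>-subset of
  the first set carries at most as much mass as some \<open>k\<close>-subset of the second; for
  enumerations sorted by weight this is the prefix-sum condition. In this form it is
  transitive, invariant under relabelling and stable under products with nonnegative
  factors. The hypothesis on the biases is used in the same spirit: every \<open>k\<close>-set of
  \<open>\<alpha>\<close>-coordinates has product at most that of some \<open>k\<close>-set of \<open>\<beta>\<close>-coordinates.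

  Induct on the number of coordinates, with \<open>a = \<alpha> i\<close> and \<open>b = \<beta> j\<close> the largest biases, so
  \<open>a \<le> b\<close>. If no other \<open>\<beta>\<close>-coordinate lies below \<open>a\<close>, the single coins satisfy
  \<open>coin a \<prec> coin b\<close> and the rest follows by induction. Otherwise let \<open>e = \<beta> m\<close> be the largest
  other \<open>\<beta>\<close>-coordinate below \<open>a\<close> and replace the pair \<open>(b, e)\<close> by \<open>(a, b e / a)\<close>: the
  product is unchanged, the new two-coin distribution is majorized by the old one, the
  product hypothesis survives on the remaining coordinates, and \<open>a\<close> has become a common
  coordinate.
\<close>

definition majorized_on :: "'a set \<Rightarrow> ('a \<Rightarrow> real) \<Rightarrow> 'b set \<Rightarrow> ('b \<Rightarrow> real) \<Rightarrow> bool" where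
  "majorized_on A P B Q \<longleftrightarrow> finite A \<and> finite B \<and> card A = card B \<and> sum P A = sum Q B \<and>
     (\<forall>S\<subseteq>A. \<exists>T\<subseteq>B. card T = card S \<and> sum P S \<le> sum Q T)"

lemma majorized_on_refl: "finite A \<Longrightarrow> majorized_on A P A P"
  unfolding majorized_on_def by auto

lemma majorized_on_trans:
  assumes "majorized_on A P B Q" "majorized_on B Q C R"
  shows "majorized_on A P C R"
proof -
  have "\<exists>U\<subseteq>C. card U = card S \<and> sum P S \<le> sum R U" if "S \<subseteq> A" for S
  proof -
    obtain T where T: "T \<subseteq> B" "card T = card S" "sum P S \<le> sum Q T"
      using assms(1) \<open>S \<subseteq> A\<close> unfolding majorized_on_def by blast
    obtain U where U: "U \<subseteq> C" "card U = card T" "sum Q T \<le> sum R U"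
      using assms(2) \<open>T \<subseteq> B\<close> unfolding majorized_on_def by blast
    from T U show ?thesis by (intro exI[of _ U]) simp
  qed
  then show ?thesis using assms unfolding majorized_on_def by simp
qed

lemma majorized_on_bij_betw:
  assumes "majorized_on A P B Q" "bij_betw h A A'" "bij_betw k B B'"
    and "\<And>x. x \<in> A \<Longrightarrow> P' (h x) = P x" "\<And>y. y \<in> B \<Longrightarrow> Q' (k y) = Q y"
  shows "majorized_on A' P' B' Q'"
proof -
  have image_h: "card (h ` S) = card S \<and> sum P' (h ` S) = sum P S" if "S \<subseteq> A" for S
  proof -
    have "inj_on h S" using that bij_betw_imp_inj_on[OF assms(2)] by (rule inj_on_subset[rotated])
    then show ?thesis using that assms(4) by (simp add: card_image sum.reindex subset_iff)
  qed
  have image_k: "card (k ` T) = card T \<and> sum Q' (k ` T) = sum Q T" if "T \<subseteq> B" for T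
  proof -
    have "inj_on k T" using that bij_betw_imp_inj_on[OF assms(3)] by (rule inj_on_subset[rotated])
    then show ?thesis using that assms(5) by (simp add: card_image sum.reindex subset_iff)
  qed
  have "\<exists>T'\<subseteq>B'. card T' = card S' \<and> sum P' S' \<le> sum Q' T'" if "S' \<subseteq> A'" for S'
  proof -
    define S where "S = {x\<in>A. h x \<in> S'}"
    have S: "S \<subseteq> A" "h ` S = S'"
      using that assms(2) unfolding S_def bij_betw_def by auto
    then obtain T where T: "T \<subseteq> B" "card T = card S" "sum P S \<le> sum Q T"
      using assms(1) unfolding majorized_on_def by blast
    have "k ` T \<subseteq> B'" using T(1) assms(3) unfolding bij_betw_def by blast
    with T show ?thesis
      using image_h[OF S(1)] image_k[OF T(1)] S(2) by (intro exI[of _ "k ` T"]) simp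
  qed
  moreover have "h ` A = A'" "k ` B = B'" using assms(2,3) by (simp_all add: bij_betw_def)
  ultimately show ?thesis
    using assms(1) image_h[of A] image_k[of B] unfolding majorized_on_def by auto
qed

lemma majorized_on_Times_left:
  assumes maj: "majorized_on A P B Q" and "finite C" and R: "\<And>c. c \<in> C \<Longrightarrow> 0 \<le> R c"
  shows "majorized_on (C \<times> A) (\<lambda>(c, x). R c * P x) (C \<times> B) (\<lambda>(c, y). R c * Q y)"
proof -
  have fin: "finite A" "finite B" and ex: "\<forall>S\<subseteq>A. \<exists>T\<subseteq>B. card T = card S \<and> sum P S \<le> sum Q T"
    using maj unfolding majorized_on_def by simp_all
  have "\<exists>T\<subseteq>C \<times> B. card T = card S \<and> sum (\<lambda>(c, x). R c * P x) S \<le> sum (\<lambda>(c, y). R c * Q y) T"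
    if "S \<subseteq> C \<times> A" for S
  proof -
    define fibre where "fibre c = {x. (c, x) \<in> S}" for c
    have S_eq: "S = Sigma C fibre" using that unfolding fibre_def by auto
    have fibre_sub: "fibre c \<subseteq> A" for c using that unfolding fibre_def by blast
    have "\<forall>c\<in>C. \<exists>T. T \<subseteq> B \<and> card T = card (fibre c) \<and> sum P (fibre c) \<le> sum Q T"
      using ex fibre_sub by blast
    then obtain t where t: "\<forall>c\<in>C. t c \<subseteq> B \<and> card (t c) = card (fibre c) \<and> sum P (fibre c) \<le> sum Q (t c)"
      by (rule bchoice[THEN exE])
    have fin_fibre: "\<forall>c\<in>C. finite (fibre c)"
      using finite_subset[OF fibre_sub fin(1)] by blast
    have fin_t: "\<forall>c\<in>C. finite (t c)"
      using t finite_subset[OF _ fin(2)] by blast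
    have "card (Sigma C t) = card S"
      unfolding S_eq using fin_fibre fin_t t \<open>finite C\<close> by (simp add: card_SigmaI)
    moreover have "sum (\<lambda>(c, x). R c * P x) S = (\<Sum>c\<in>C. R c * sum P (fibre c))"
      unfolding S_eq sum.Sigma[OF \<open>finite C\<close> fin_fibre, symmetric] by (simp add: sum_distrib_left)
    moreover have "\<dots> \<le> (\<Sum>c\<in>C. R c * sum Q (t c))"
      using t R by (intro sum_mono mult_left_mono) auto
    moreover have "\<dots> = sum (\<lambda>(c, y). R c * Q y) (Sigma C t)"
      unfolding sum.Sigma[OF \<open>finite C\<close> fin_t, symmetric] by (simp add: sum_distrib_left)
    moreover have "Sigma C t \<subseteq> C \<times> B" using t by blast
    ultimately show ?thesis by (intro exI[of _ "Sigma C t"]) simp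
  qed
  moreover have "sum (\<lambda>(c, x). R c * P x) (C \<times> A) = sum (\<lambda>(c, y). R c * Q y) (C \<times> B)"
    using maj unfolding majorized_on_def by (simp add: sum.cartesian_product' sum_distrib_left[symmetric])
  ultimately show ?thesis
    using maj \<open>finite C\<close> unfolding majorized_on_def by (simp add: card_cartesian_product)
qed

lemma majorized_on_Times:
  assumes PQ: "majorized_on A P B Q" and RS: "majorized_on C R D S"
    and Q: "\<And>y. y \<in> B \<Longrightarrow> 0 \<le> Q y" and R: "\<And>z. z \<in> C \<Longrightarrow> 0 \<le> R z"
  shows "majorized_on (A \<times> C) (\<lambda>(x, z). P x * R z) (B \<times> D) (\<lambda>(y, w). Q y * S w)"
proof -
  have "finite B" "finite C" using PQ RS unfolding majorized_on_def by simp_all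
  have "majorized_on (C \<times> A) (\<lambda>(z, x). R z * P x) (C \<times> B) (\<lambda>(z, y). R z * Q y)"
    using majorized_on_Times_left[OF PQ \<open>finite C\<close> R] .
  then have "majorized_on (A \<times> C) (\<lambda>(x, z). P x * R z) (B \<times> C) (\<lambda>(y, z). Q y * R z)"
    by (rule majorized_on_bij_betw[where h = prod.swap and k = prod.swap])
      (auto simp: bij_betw_def inj_on_def product_swap mult.commute)
  moreover have "majorized_on (B \<times> C) (\<lambda>(y, z). Q y * R z) (B \<times> D) (\<lambda>(y, w). Q y * S w)"
    using majorized_on_Times_left[OF RS \<open>finite B\<close> Q] .
  ultimately show ?thesis by (rule majorized_on_trans)
qed

lemma sort_map_eq_map_sort_key: "sort (map f xs) = map f (sort_key f xs)"
  by (rule properties_for_sort) simp_all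

lemma sum_le_sum_if_card_eq:
  fixes f :: "'a \<Rightarrow> 'b::ordered_comm_monoid_add"
  assumes "finite A" "finite B" "card A = card B" "\<And>x y. x \<in> A \<Longrightarrow> y \<in> B \<Longrightarrow> f x \<le> f y"
  shows "sum f A \<le> sum f B"
proof -
  obtain h where h: "bij_betw h A B" using finite_same_card_bij assms(1-3) by blast
  have "sum f A \<le> sum (f \<circ> h) A"
    using assms(4) bij_betwE[OF h] by (intro sum_mono) simp
  also have "\<dots> = sum f B" using sum.reindex_bij_betw[OF h] by simp
  finally show ?thesis .
qed

lemma sum_le_sum_take:
  fixes f :: "'a \<Rightarrow> 'b::ordered_comm_monoid_add"
  assumes "distinct zs" "sorted_wrt (\<ge>) (map f zs)" "T \<subseteq> set zs" "card T = k"
  shows "sum f T \<le> sum f (set (take k zs))"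
proof -
  let ?top = "set (take k zs)"
  have "finite T" using assms(3) finite_subset by blast
  have "k \<le> length zs"
    using card_mono[OF _ assms(3)] assms(1,4) distinct_card by fastforce
  then have card_top: "card ?top = k"
    using assms(1) by (simp add: distinct_card distinct_take)
  have le: "f x \<le> f y" if "x \<in> T - ?top" "y \<in> ?top - T" for x y
  proof -
    have "x \<in> set (take k zs @ drop k zs)" using that(1) assms(3) by auto
    then have "x \<in> set (drop k zs)" using that(1) unfolding set_append by blast
    then show ?thesis
      using that(2) assms(2) sorted_wrt_append[of "(\<ge>)" "map f (take k zs)" "map f (drop k zs)"]
      by (simp flip: map_append)
  qed
  have "card (T - ?top) = card (?top - T)"
    using card_top assms(4) \<open>finite T\<close> by (simp add: card_Diff_subset_Int Int_commute)
  then have "sum f (T - ?top) \<le> sum f (?top - T)"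
    using le \<open>finite T\<close> by (intro sum_le_sum_if_card_eq) auto
  then have "sum f (T \<inter> ?top) + sum f (T - ?top) \<le> sum f (?top \<inter> T) + sum f (?top - T)"
    by (simp add: Int_commute add_left_mono)
  then show ?thesis using \<open>finite T\<close> by (simp add: sum.Int_Diff[symmetric])
qed

lemma majorized_if_majorized_on:
  assumes "distinct xs" "majorized_on (set xs) P (set xs) Q"
  shows "majorized (map P xs) (map Q xs)"
proof -
  define desc where "desc f = rev (sort_key f xs)" for f :: "_ \<Rightarrow> real"
  have desc: "distinct (desc f)" "set (desc f) = set xs" "length (desc f) = length xs"
      "sorted_wrt (\<ge>) (map f (desc f))" for f
    using assms(1) by (simp_all add: desc_def rev_map[symmetric] sorted_wrt_rev)
  have prefix: "sum_list (take k (rev (sort (map f xs)))) = sum f (set (take k (desc f)))" for f k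
    using desc(1) by (simp add: desc_def sort_map_eq_map_sort_key rev_map take_map
        sum_list_distinct_conv_sum_set distinct_take)
  have "sum_list (take k (rev (sort (map P xs)))) \<le> sum_list (take k (rev (sort (map Q xs))))"
    if "k \<le> length xs" for k
  proof -
    let ?S = "set (take k (desc P))"
    have "?S \<subseteq> set xs" "card ?S = k"
      using desc[of P] that by (auto simp: distinct_card distinct_take dest: in_set_takeD)
    then obtain T where T: "T \<subseteq> set xs" "card T = k" "sum P ?S \<le> sum Q T"
      using assms(2) unfolding majorized_on_def by metis
    have "sum Q T \<le> sum Q (set (take k (desc Q)))"
      using desc[of Q] T by (intro sum_le_sum_take) auto
    then show ?thesis using T(3) by (simp add: prefix)
  qed
  moreover have "sum_list (rev (sort (map P xs))) = sum_list (rev (sort (map Q xs)))"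
    using prefix[where k = "length xs"] desc(2,3) assms(2) unfolding majorized_on_def
    by (simp add: distinct_card)
  ultimately show ?thesis unfolding majorized_def by simp
qed

lemma majorized_onI_enumeration:
  assumes "finite A" "distinct L" "card A = length L" "sum P A = sum_list (map Q L)"
    and "\<And>S. S \<subseteq> A \<Longrightarrow> sum P S \<le> sum_list (map Q (take (card S) L))"
  shows "majorized_on A P (set L) Q"
proof -
  have "\<exists>T\<subseteq>set L. card T = card S \<and> sum P S \<le> sum Q T" if "S \<subseteq> A" for S
  proof -
    have "card S \<le> length L" using card_mono[OF assms(1) that] assms(3) by simp
    then show ?thesis
      using assms(2,5) that
      by (intro exI[of _ "set (take (card S) L)"])
        (auto simp: distinct_card distinct_take sum_list_distinct_conv_sum_set dest: in_set_takeD)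
  qed
  then show ?thesis
    using assms(1-4) by (simp add: majorized_on_def distinct_card sum_list_distinct_conv_sum_set)
qed

definition coin :: "real \<Rightarrow> bool \<Rightarrow> real" where
  "coin a u = (1 + (if u then -1 else 1) * a) / 2"

lemma coin_simps: "coin a False = (1 + a) / 2" "coin a True = (1 - a) / 2"
  by (simp_all add: coin_def)

lemma coin_nonneg: "0 \<le> a \<Longrightarrow> a \<le> 1 \<Longrightarrow> 0 \<le> coin a u"
  by (cases u) (simp_all add: coin_simps)

lemma majorized_on_coin:
  assumes "0 \<le> a" "a \<le> b"
  shows "majorized_on UNIV (coin a) UNIV (coin b)"
proof -
  have "majorized_on UNIV (coin a) (set [False, True]) (coin b)"
  proof (rule majorized_onI_enumeration)
    fix S :: "bool set"
    have "S \<in> Pow {False, True}" by auto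
    then show "sum (coin a) S \<le> sum_list (map (coin b) (take (card S) [False, True]))"
      using assms unfolding Pow_insert Pow_empty
      by (elim UnE imageE insertE emptyE) (simp_all add: coin_simps field_simps)
  qed (simp_all add: UNIV_bool coin_simps field_simps)
  then show ?thesis by (simp add: UNIV_bool)
qed

lemma majorized_on_coin_pair:
  assumes "0 \<le> a" "0 \<le> d" "0 \<le> e" "a \<le> b" "d \<le> b" "b \<le> 1" "a * d = b * e"
  shows "majorized_on UNIV (\<lambda>(u, v). coin a u * coin d v) UNIV (\<lambda>(u, v). coin b u * coin e v)"
proof -
  have UNIV_pair: "(UNIV :: (bool \<times> bool) set) = {(False, False), (False, True), (True, False), (True, True)}"
    by (auto simp: UNIV_bool)
  define q where "q = a * d"
  have sum_le: "a + d \<le> b + e"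
  proof (cases "b = 0")
    case False
    have "b * (b + e - a - d) = (b - a) * (b - d)" using assms(7) by algebra
    also have "\<dots> \<ge> 0" using assms(4,5) by simp
    finally have "0 \<le> b * (b + e - a - d)" .
    moreover have "0 < b" using False assms(1,4) by simp
    ultimately show ?thesis by (simp add: zero_le_mult_iff)
  qed (use assms in simp)
  have "a \<le> 1" "d \<le> 1" "0 \<le> b" using assms by simp_all
  then have q: "0 \<le> q" "q \<le> a" "q \<le> d" "q \<le> e"
    using mult_left_le[of d a] mult_left_le_one_le[of d a] mult_left_le_one_le[of e b] assms
    unfolding q_def by simp_all
  have P: "coin a False * coin d False = (1 + a + d + q) / 4"
    "coin a False * coin d True = (1 + a - d - q) / 4"
    "coin a True * coin d False = (1 - a + d - q) / 4"
    "coin a True * coin d True = (1 - a - d + q) / 4"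
    by (simp_all add: coin_simps q_def field_simps)
  have Q: "coin b False * coin e False = (1 + b + e + q) / 4"
    "coin b False * coin e True = (1 + b - e - q) / 4"
    "coin b True * coin e False = (1 - b + e - q) / 4"
    "coin b True * coin e True = (1 - b - e + q) / 4"
    by (simp_all add: coin_simps q_def assms(7) field_simps)
  have "majorized_on UNIV (\<lambda>(u, v). coin a u * coin d v)
      (set [(False, False), (False, True), (True, False), (True, True)]) (\<lambda>(u, v). coin b u * coin e v)"
  proof (rule majorized_onI_enumeration)
    fix S :: "(bool \<times> bool) set"
    have "S \<in> Pow {(False, False), (False, True), (True, False), (True, True)}" by auto
    then show "sum (\<lambda>(u, v). coin a u * coin d v) S
        \<le> sum_list (map (\<lambda>(u, v). coin b u * coin e v)
             (take (card S) [(False, False), (False, True), (True, False), (True, True)]))"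
      using assms(4,5) sum_le q unfolding Pow_insert Pow_empty
      by (elim UnE imageE insertE emptyE) (simp_all add: P Q field_simps)
  qed (simp_all add: UNIV_pair P Q field_simps)
  then show ?thesis by (simp add: UNIV_pair)
qed

abbreviation cube :: "'i set \<Rightarrow> ('i \<Rightarrow> bool) set" where
  "cube I \<equiv> PiE I (\<lambda>_. UNIV)"

definition prod_coin :: "'i set \<Rightarrow> ('i \<Rightarrow> real) \<Rightarrow> ('i \<Rightarrow> bool) \<Rightarrow> real" where
  "prod_coin I f x = (\<Prod>i\<in>I. coin (f i) (x i))"

lemma prod_coin_nonneg: "(\<And>i. i \<in> I \<Longrightarrow> 0 \<le> f i \<and> f i \<le> 1) \<Longrightarrow> 0 \<le> prod_coin I f x"
  unfolding prod_coin_def by (intro prod_nonneg) (auto intro: coin_nonneg)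

lemma prod_coin_cong: "(\<And>i. i \<in> I \<Longrightarrow> f i = g i) \<Longrightarrow> prod_coin I f = prod_coin I g"
  unfolding prod_coin_def by (intro ext prod.cong) auto

lemma prod_coin_fun_upd:
  assumes "finite I" "i \<in> I"
  shows "prod_coin I f (x(i := u)) = coin (f i) u * prod_coin (I - {i}) f x"
proof -
  have "prod_coin I f (x(i := u)) = coin (f i) u * prod_coin (I - {i}) f (x(i := u))"
    unfolding prod_coin_def by (subst prod.remove[OF assms]) simp
  also have "prod_coin (I - {i}) f (x(i := u)) = prod_coin (I - {i}) f x"
    unfolding prod_coin_def by (intro prod.cong) auto
  finally show ?thesis .
qed

lemma bij_betw_cube_fun_upd:
  assumes "i \<in> I"
  shows "bij_betw (\<lambda>(u, x). x(i := u)) (UNIV \<times> cube (I - {i})) (cube I)"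
  using assms inj_combinator[of i "I - {i}" "\<lambda>_. UNIV"] PiE_insert_eq[of i "I - {i}" "\<lambda>_. UNIV", symmetric]
  by (simp add: bij_betw_def insert_absorb)

lemma bij_betw_cube_fun_upd2:
  assumes "j \<in> I" "m \<in> I" "j \<noteq> m"
  shows "bij_betw (\<lambda>((u, v), x). (x(m := v))(j := u)) (UNIV \<times> cube (I - {j} - {m})) (cube I)"
proof -
  let ?K = "I - {j} - {m}"
  have assoc: "bij_betw (\<lambda>((u, v), x). (u, (v, x))) (UNIV \<times> cube ?K) (UNIV \<times> (UNIV \<times> cube ?K))"
    by (rule bij_betw_byWitness[where f' = "\<lambda>(u, (v, x)). ((u, v), x)"]) auto
  have upd_m: "bij_betw (map_prod id (\<lambda>(v, x). x(m := v))) (UNIV \<times> (UNIV \<times> cube ?K)) (UNIV \<times> cube (I - {j}))"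
    using assms by (intro bij_betw_map_prod bij_betw_id bij_betw_cube_fun_upd) simp
  have "bij_betw ((\<lambda>(u, y). y(j := u)) \<circ> (map_prod id (\<lambda>(v, x). x(m := v)) \<circ> (\<lambda>((u, v), x). (u, (v, x)))))
      (UNIV \<times> cube ?K) (cube I)"
    by (rule bij_betw_trans[OF bij_betw_trans[OF assoc upd_m] bij_betw_cube_fun_upd[OF assms(1)]])
  also have "(\<lambda>(u, y). y(j := u)) \<circ> (map_prod id (\<lambda>(v, x). x(m := v)) \<circ> (\<lambda>((u, v), x). (u, (v, x))))
      = (\<lambda>((u, v), x). (x(m := v))(j := u))"
    by (auto simp: fun_eq_iff)
  finally show ?thesis .
qed

lemma majorized_on_prod_coin_insert:
  assumes "finite I" "finite I'" "i \<in> I" "j \<in> I'"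
    and "\<forall>k\<in>I. 0 \<le> f k \<and> f k \<le> 1" "\<forall>k\<in>I'. 0 \<le> g k \<and> g k \<le> 1"
    and "majorized_on UNIV (coin (f i)) UNIV (coin (g j))"
    and "majorized_on (cube (I - {i})) (prod_coin (I - {i}) f) (cube (I' - {j})) (prod_coin (I' - {j}) g)"
  shows "majorized_on (cube I) (prod_coin I f) (cube I') (prod_coin I' g)"
proof -
  have "majorized_on (UNIV \<times> cube (I - {i})) (\<lambda>(u, x). coin (f i) u * prod_coin (I - {i}) f x)
      (UNIV \<times> cube (I' - {j})) (\<lambda>(u, y). coin (g j) u * prod_coin (I' - {j}) g y)"
    using assms by (intro majorized_on_Times) (auto intro: coin_nonneg prod_coin_nonneg)
  then show ?thesis
    by (rule majorized_on_bij_betw[OF _ bij_betw_cube_fun_upd bij_betw_cube_fun_upd])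
      (use assms in \<open>auto simp: prod_coin_fun_upd\<close>)
qed

lemma majorized_on_prod_coin_pair:
  assumes "finite I" "j \<in> I" "m \<in> I" "j \<noteq> m" "\<forall>k\<in>I. 0 \<le> f k \<and> f k \<le> 1"
    and "0 \<le> a" "0 \<le> d" "a \<le> f j" "d \<le> f j" "a * d = f j * f m"
  shows "majorized_on (cube I) (prod_coin I (f(j := a, m := d))) (cube I) (prod_coin I f)"
proof -
  let ?K = "I - {j} - {m}"
  have upd: "prod_coin I g ((x(m := v))(j := u)) = coin (g j) u * coin (g m) v * prod_coin ?K g x"
    for g x u v
    using assms(1-4) by (simp add: prod_coin_fun_upd)
  have "majorized_on (UNIV \<times> cube ?K) (\<lambda>(p, x). (\<lambda>(u, v). coin a u * coin d v) p * prod_coin ?K f x)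
      (UNIV \<times> cube ?K) (\<lambda>(p, x). (\<lambda>(u, v). coin (f j) u * coin (f m) v) p * prod_coin ?K f x)"
  proof (rule majorized_on_Times[OF majorized_on_coin_pair majorized_on_refl])
    show "finite (cube ?K)" using assms(1) by (simp add: finite_PiE)
  qed (use assms in \<open>auto intro!: mult_nonneg_nonneg coin_nonneg prod_coin_nonneg\<close>)
  then show ?thesis
  proof (rule majorized_on_bij_betw[OF _ bij_betw_cube_fun_upd2 bij_betw_cube_fun_upd2])
    have "prod_coin ?K (f(j := a, m := d)) = prod_coin ?K f" by (rule prod_coin_cong) auto
    then show "prod_coin I (f(j := a, m := d)) ((\<lambda>((u, v), x). (x(m := v))(j := u)) p)
        = (\<lambda>(p, x). (\<lambda>(u, v). coin a u * coin d v) p * prod_coin ?K f x) p" for p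
      using assms(4) by (auto simp: upd split: prod.splits)
  qed (use assms in \<open>auto simp: upd split: prod.splits\<close>)
qed

definition prod_dominated :: "'i set \<Rightarrow> ('i \<Rightarrow> real) \<Rightarrow> 'j set \<Rightarrow> ('j \<Rightarrow> real) \<Rightarrow> bool" where
  "prod_dominated I \<alpha> I' \<beta> \<longleftrightarrow> (\<forall>S\<subseteq>I. \<exists>T\<subseteq>I'. card T = card S \<and> prod \<alpha> S \<le> prod \<beta> T)"

lemma prod_dominated_singleton:
  assumes "prod_dominated I \<alpha> I' \<beta>" "i \<in> I"
  shows "\<exists>t\<in>I'. \<alpha> i \<le> \<beta> t"
proof -
  obtain T where "T \<subseteq> I'" "card T = card {i}" "prod \<alpha> {i} \<le> prod \<beta> T"
    using assms unfolding prod_dominated_def by (meson empty_subsetI insert_subset)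
  then show ?thesis by (auto simp: card_1_singleton_iff)
qed

lemma prod_le_prod_if_bounded:
  fixes \<alpha> \<beta> :: "_ \<Rightarrow> real"
  assumes "card S = card T" "0 \<le> a" "\<forall>s\<in>S. 0 \<le> \<alpha> s \<and> \<alpha> s \<le> a" "\<forall>t\<in>T. a \<le> \<beta> t"
  shows "prod \<alpha> S \<le> prod \<beta> T"
proof -
  have "prod \<alpha> S \<le> (\<Prod>_\<in>S. a)" using assms(3) by (intro prod_mono) simp
  also have "\<dots> = (\<Prod>_\<in>T. a)" using assms(1) by simp
  also have "\<dots> \<le> prod \<beta> T" using assms(2,4) by (intro prod_mono) simp
  finally show ?thesis .
qed

lemma prod_dominated_if_bounded:
  assumes "finite I" "card I \<le> card I'" "0 \<le> a"
    and "\<forall>k\<in>I. 0 \<le> \<alpha> k \<and> \<alpha> k \<le> a" "\<forall>t\<in>I'. a \<le> \<beta> t"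
  shows "prod_dominated I \<alpha> I' \<beta>"
  unfolding prod_dominated_def
proof (intro allI impI)
  fix S assume "S \<subseteq> I"
  then have "card S \<le> card I'" using card_mono[OF assms(1)] assms(2) by (meson order_trans)
  then obtain T where "T \<subseteq> I'" "card T = card S" by (meson obtain_subset_with_card_n)
  with \<open>S \<subseteq> I\<close> assms(3-5) show "\<exists>T\<subseteq>I'. card T = card S \<and> prod \<alpha> S \<le> prod \<beta> T"
    by (intro exI[of _ T]) (auto intro!: prod_le_prod_if_bounded)
qed

lemma prod_le_max_mult_prod:
  fixes \<beta> :: "_ \<Rightarrow> real"
  assumes "T \<subseteq> I'" "finite I'" "card T = Suc k" "j \<in> I'" "\<forall>t\<in>I'. 0 \<le> \<beta> t \<and> \<beta> t \<le> \<beta> j"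
  obtains T' where "T' \<subseteq> I' - {j}" "card T' = k" "prod \<beta> T \<le> \<beta> j * prod \<beta> T'"
proof -
  have "finite T" using assms(1,2) finite_subset by blast
  obtain t where t: "t \<in> T" "j \<in> T \<longrightarrow> t = j" using assms(3) by (cases "j \<in> T") fastforce+
  have "prod \<beta> T = \<beta> t * prod \<beta> (T - {t})" using prod.remove[OF \<open>finite T\<close> t(1)] .
  also have "\<dots> \<le> \<beta> j * prod \<beta> (T - {t})"
    using t(1) assms(1,5) by (intro mult_right_mono prod_nonneg) auto
  finally show ?thesis
    using that[of "T - {t}"] t assms(1,3) \<open>finite T\<close> by auto
qed

lemma prod_exchange:
  fixes \<beta> \<gamma> :: "'i \<Rightarrow> real"
  assumes "finite K" "T \<subseteq> K" "m \<in> K" "\<forall>t\<in>K. 0 \<le> \<beta> t" "0 \<le> b"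
    and below: "\<forall>t\<in>K. \<beta> t < a \<longrightarrow> \<beta> t \<le> \<beta> m"
    and \<gamma>: "a * \<gamma> m = b * \<beta> m" "\<forall>t\<in>K - {m}. \<gamma> t = \<beta> t"
  obtains T' where "T' \<subseteq> K" "card T' = card T" "b * prod \<beta> T \<le> a * prod \<gamma> T'"
    | T' where "T' \<subseteq> K" "card T' = card T" "\<forall>t\<in>T'. a \<le> \<gamma> t"
proof (cases "\<exists>t\<in>T. \<beta> t \<le> \<beta> m")
  case True
  then obtain t where t: "t \<in> T" "\<beta> t \<le> \<beta> m" "m \<in> T \<longrightarrow> t = m" by (cases "m \<in> T") auto
  define R where "R = T - {t}"
  have "finite T" using assms(1,2) finite_subset by blast
  have R: "finite R" "m \<notin> R" "R \<subseteq> K - {m}" using \<open>finite T\<close> t(3) assms(2) by (auto simp: R_def)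
  have "card (insert m R) = card T"
    using R card_Suc_Diff1[OF \<open>finite T\<close> t(1)] by (simp add: R_def)
  have "b * prod \<beta> T = b * (\<beta> t * prod \<beta> R)"
    using prod.remove[OF \<open>finite T\<close> t(1), of \<beta>] by (simp add: R_def)
  also have "\<dots> \<le> b * (\<beta> m * prod \<beta> R)"
    using t(2) R(3) assms(4,5) by (intro mult_left_mono mult_right_mono prod_nonneg) auto
  also have "\<dots> = a * prod \<gamma> (insert m R)"
    using R \<gamma> by (simp add: prod.cong[of R R \<gamma> \<beta>] subset_iff)
  finally show ?thesis
    using that(1)[of "insert m R"] \<open>card (insert m R) = card T\<close> R(3) assms(3) by blast
next
  case False
  then have "m \<notin> T" and "\<forall>t\<in>T. a \<le> \<beta> t" using below assms(2) by force+
  moreover have "\<forall>t\<in>T. \<gamma> t = \<beta> t" using \<open>m \<notin> T\<close> assms(2) \<gamma>(2) by blast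
  ultimately show ?thesis using that(2)[of T] assms(2) by simp
qed

lemma prod_dominated_transfer:
  fixes \<alpha> \<beta> :: "'i \<Rightarrow> real"
  assumes dom: "prod_dominated I \<alpha> I' \<beta>" and "finite I" "finite I'"
    and i: "i \<in> I" "\<forall>k\<in>I. 0 \<le> \<alpha> k \<and> \<alpha> k \<le> \<alpha> i"
    and j: "j \<in> I'" "\<forall>t\<in>I'. 0 \<le> \<beta> t \<and> \<beta> t \<le> \<beta> j"
    and m: "m \<in> I' - {j}" "\<beta> m < \<alpha> i" "\<forall>t\<in>I' - {j}. \<beta> t < \<alpha> i \<longrightarrow> \<beta> t \<le> \<beta> m"
    and d: "\<alpha> i * d = \<beta> j * \<beta> m"
  shows "prod_dominated (I - {i}) \<alpha> (I' - {j}) (\<beta>(j := \<alpha> i, m := d))"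
  unfolding prod_dominated_def
proof (intro allI impI)
  fix S assume S: "S \<subseteq> I - {i}"
  let ?\<gamma> = "\<beta>(j := \<alpha> i, m := d)"
  have "0 < \<alpha> i" using m j by force
  have "finite S" "i \<notin> S" using S \<open>finite I\<close> finite_subset by auto
  have "insert i S \<subseteq> I" using S i(1) by auto
  then obtain T where "T \<subseteq> I'" "card T = card (insert i S)" "prod \<alpha> (insert i S) \<le> prod \<beta> T"
    using dom unfolding prod_dominated_def by blast
  then have T: "T \<subseteq> I'" "card T = Suc (card S)" "\<alpha> i * prod \<alpha> S \<le> prod \<beta> T"
    using \<open>finite S\<close> \<open>i \<notin> S\<close> by simp_all
  obtain T1 where T1: "T1 \<subseteq> I' - {j}" "card T1 = card S" "prod \<beta> T \<le> \<beta> j * prod \<beta> T1"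
    using prod_le_max_mult_prod[OF T(1) \<open>finite I'\<close> T(2) j] .
  show "\<exists>T'\<subseteq>I' - {j}. card T' = card S \<and> prod \<alpha> S \<le> prod ?\<gamma> T'"
  proof (rule prod_exchange[of "I' - {j}" T1 m \<beta> "\<beta> j" "\<alpha> i" ?\<gamma>])
    fix T' assume T': "T' \<subseteq> I' - {j}" "card T' = card T1" "\<beta> j * prod \<beta> T1 \<le> \<alpha> i * prod ?\<gamma> T'"
    then have "\<alpha> i * prod \<alpha> S \<le> \<alpha> i * prod ?\<gamma> T'" using T(3) T1(3) by linarith
    then show ?thesis using T' T1(2) \<open>0 < \<alpha> i\<close> by auto
  next
    fix T' assume T': "T' \<subseteq> I' - {j}" "card T' = card T1" "\<forall>t\<in>T'. \<alpha> i \<le> ?\<gamma> t"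
    have "prod \<alpha> S \<le> prod ?\<gamma> T'"
      using T' T1(2) S i(2) \<open>0 < \<alpha> i\<close> by (intro prod_le_prod_if_bounded) auto
    then show ?thesis using T' T1(2) by auto
  qed (use assms T1 in auto)
qed

lemma prod_le_prod_lessThan_card:
  fixes f :: "nat \<Rightarrow> real"
  assumes "\<forall>i j. i \<le> j \<and> j < n \<longrightarrow> f j \<le> f i" "\<forall>j<n. 0 \<le> f j" "S \<subseteq> {..<n}"
  shows "prod f S \<le> prod f {..<card S}"
  using assms
proof (induction n arbitrary: S)
  case 0
  then show ?case by simp
next
  case (Suc n)
  show ?case
  proof (cases "n \<in> S")
    case False
    then have "S \<subseteq> {..<n}" using Suc.prems(3) by (auto simp: less_Suc_eq)
    then show ?thesis using Suc by simp
  next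
    case True
    let ?S' = "S - {n}"
    have "?S' \<subseteq> {..<n}" using Suc.prems(3) by (auto simp: less_Suc_eq)
    then have "card ?S' \<le> n" using card_mono[of "{..<n}" ?S'] by simp
    have "finite S" using Suc.prems(3) finite_subset by blast
    have "prod f S = f n * prod f ?S'" using prod.remove[OF \<open>finite S\<close> True] .
    also have "\<dots> \<le> f (card ?S') * prod f {..<card ?S'}"
      using Suc.IH[OF _ _ \<open>?S' \<subseteq> {..<n}\<close>] Suc.prems(1,2) \<open>card ?S' \<le> n\<close> \<open>?S' \<subseteq> {..<n}\<close>
      by (intro mult_mono prod_nonneg) auto
    also have "\<dots> = prod f {..<Suc (card ?S')}" by (simp add: mult.commute)
    also have "\<dots> = prod f {..<card S}" using card_Suc_Diff1[OF \<open>finite S\<close> True] by simp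
    finally show ?thesis .
  qed
qed

lemma prod_dominated_if_sorted:
  fixes \<alpha> \<beta> :: "nat \<Rightarrow> real"
  assumes "\<forall>i j. i \<le> j \<and> j < n \<longrightarrow> \<alpha> j \<le> \<alpha> i" "\<forall>j<n. 0 \<le> \<alpha> j"
    and "\<forall>k\<in>{1..n}. (\<Prod>j<k. \<alpha> j) \<le> (\<Prod>j<k. \<beta> j)"
  shows "prod_dominated {..<n} \<alpha> {..<n} \<beta>"
  unfolding prod_dominated_def
proof (intro allI impI)
  fix S assume S: "S \<subseteq> {..<n}"
  then have "card S \<le> n" using card_mono[of "{..<n}" S] by simp
  have "prod \<alpha> S \<le> prod \<alpha> {..<card S}" using prod_le_prod_lessThan_card[OF assms(1,2) S] .
  also have "\<dots> \<le> prod \<beta> {..<card S}"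
    using assms(3) \<open>card S \<le> n\<close> by (cases "card S = 0") auto
  finally show "\<exists>T\<subseteq>{..<n}. card T = card S \<and> prod \<alpha> S \<le> prod \<beta> T"
    using \<open>card S \<le> n\<close> by (intro exI[of _ "{..<card S}"]) auto
qed

lemma finite_obtain_max:
  fixes f :: "'a \<Rightarrow> 'b::linorder"
  assumes "finite A" "A \<noteq> {}"
  obtains x where "x \<in> A" "\<forall>y\<in>A. f y \<le> f x"
proof -
  have "Max (f ` A) \<in> f ` A" using assms by simp
  then obtain x where "x \<in> A" "Max (f ` A) = f x" by blast
  moreover have "\<forall>y\<in>A. f y \<le> f x"
    using \<open>Max (f ` A) = f x\<close> assms(1) by (metis Max_ge finite_imageI imageI)
  ultimately show ?thesis using that by blast
qed

lemma set_cube_points: "set (cube_points n) = {xs. length xs = n}"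
  unfolding cube_points_def set_n_lists by (auto simp flip: UNIV_bool)

lemma bij_betw_cube_cube_points:
  "bij_betw (\<lambda>x. map x [0..<n]) (cube {..<n}) (set (cube_points n))"
proof (rule bij_betw_byWitness[where f' = "\<lambda>xs j. if j < n then xs ! j else undefined"])
  show "\<forall>x\<in>cube {..<n}. (\<lambda>j. if j < n then map x [0..<n] ! j else undefined) = x"
  proof (intro ballI ext)
    fix x j assume "x \<in> cube {..<n}"
    then show "(if j < n then map x [0..<n] ! j else undefined) = x j"
      using PiE_arb[of x "{..<n}" "\<lambda>_. UNIV" j] by simp
  qed
  show "\<forall>xs\<in>set (cube_points n). map (\<lambda>j. if j < n then xs ! j else undefined) [0..<n] = xs"
    by (intro ballI nth_equalityI) (simp_all add: set_cube_points)
  show "(\<lambda>x. map x [0..<n]) ` cube {..<n} \<subseteq> set (cube_points n)"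
    by (simp add: set_cube_points image_subset_iff)
  show "(\<lambda>xs j. if j < n then xs ! j else undefined) ` set (cube_points n) \<subseteq> cube {..<n}"
    by (simp add: image_subset_iff PiE_iff extensional_def)
qed

lemma prod_dist_map: "prod_dist n f (map x [0..<n]) = prod_coin {..<n} f x"
  unfolding prod_dist_def prod_coin_def coin_def by (simp add: prod_dividef)

lemma majorized_on_prod_coin_step_below:
  fixes \<alpha> \<beta> :: "'i \<Rightarrow> real"
  assumes fin: "finite I" "finite I'"
    and \<alpha>: "\<forall>k\<in>I. 0 \<le> \<alpha> k \<and> \<alpha> k \<le> 1" "i \<in> I" "\<forall>k\<in>I. \<alpha> k \<le> \<alpha> i"
    and \<beta>: "\<forall>k\<in>I'. 0 \<le> \<beta> k \<and> \<beta> k \<le> 1" "j \<in> I'" "\<forall>t\<in>I'. \<beta> t \<le> \<beta> j" "\<alpha> i \<le> \<beta> j"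
    and m: "m \<in> I' - {j}" "\<beta> m < \<alpha> i" "\<forall>t\<in>I' - {j}. \<beta> t < \<alpha> i \<longrightarrow> \<beta> t \<le> \<beta> m"
    and dom: "prod_dominated I \<alpha> I' \<beta>"
    and IH: "\<And>\<gamma>. \<forall>k\<in>I' - {j}. 0 \<le> \<gamma> k \<and> \<gamma> k \<le> 1 \<Longrightarrow> prod_dominated (I - {i}) \<alpha> (I' - {j}) \<gamma> \<Longrightarrow>
      majorized_on (cube (I - {i})) (prod_coin (I - {i}) \<alpha>) (cube (I' - {j})) (prod_coin (I' - {j}) \<gamma>)"
  shows "majorized_on (cube I) (prod_coin I \<alpha>) (cube I') (prod_coin I' \<beta>)"
proof -
  define d where "d = \<beta> j * \<beta> m / \<alpha> i"
  let ?\<gamma> = "\<beta>(j := \<alpha> i, m := d)"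
  have "0 \<le> \<beta> m" "0 \<le> \<beta> j" "\<beta> j \<le> 1" using m(1) \<beta>(1,2) by auto
  have "0 < \<alpha> i" using m(2) \<open>0 \<le> \<beta> m\<close> by linarith
  have d: "\<alpha> i * d = \<beta> j * \<beta> m" using \<open>0 < \<alpha> i\<close> by (simp add: d_def)
  have "0 \<le> d" using \<open>0 < \<alpha> i\<close> \<open>0 \<le> \<beta> m\<close> \<open>0 \<le> \<beta> j\<close> by (simp add: d_def)
  have "\<beta> j * \<beta> m \<le> \<beta> j * \<alpha> i" using m(2) \<open>0 \<le> \<beta> j\<close> by (simp add: mult_left_mono)
  then have "d \<le> \<beta> j" using \<open>0 < \<alpha> i\<close> by (simp add: d_def pos_divide_le_eq)
  have bounds_\<gamma>: "\<forall>k\<in>I'. 0 \<le> ?\<gamma> k \<and> ?\<gamma> k \<le> 1"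
    using \<beta>(1) \<open>0 < \<alpha> i\<close> \<open>\<alpha> i \<le> \<beta> j\<close> \<open>0 \<le> d\<close> \<open>d \<le> \<beta> j\<close> \<open>\<beta> j \<le> 1\<close> by auto
  have "majorized_on (cube I') (prod_coin I' ?\<gamma>) (cube I') (prod_coin I' \<beta>)"
    using m(1) \<open>0 < \<alpha> i\<close> \<open>0 \<le> d\<close> \<open>\<alpha> i \<le> \<beta> j\<close> \<open>d \<le> \<beta> j\<close>
    by (intro majorized_on_prod_coin_pair[OF fin(2) \<beta>(2) _ _ \<beta>(1) _ _ _ _ d]) auto
  moreover have "majorized_on (cube I) (prod_coin I \<alpha>) (cube I') (prod_coin I' ?\<gamma>)"
  proof (rule majorized_on_prod_coin_insert[OF fin \<alpha>(2) \<beta>(2) \<alpha>(1) bounds_\<gamma>])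
    show "majorized_on UNIV (coin (\<alpha> i)) UNIV (coin (?\<gamma> j))"
      using m(1) by (auto simp: majorized_on_refl)
    have "prod_dominated (I - {i}) \<alpha> (I' - {j}) ?\<gamma>"
      using \<alpha> \<beta> m by (intro prod_dominated_transfer[OF dom fin \<alpha>(2) _ \<beta>(2) _ _ _ _ d]) auto
    then show "majorized_on (cube (I - {i})) (prod_coin (I - {i}) \<alpha>) (cube (I' - {j})) (prod_coin (I' - {j}) ?\<gamma>)"
      using IH bounds_\<gamma> by simp
  qed
  ultimately show ?thesis by (rule majorized_on_trans[rotated])
qed

lemma majorized_on_prod_coin:
  fixes \<alpha> \<beta> :: "'i \<Rightarrow> real"
  assumes "finite I" "finite I'" "card I = card I'"
    and "\<forall>k\<in>I. 0 \<le> \<alpha> k \<and> \<alpha> k \<le> 1" "\<forall>k\<in>I'. 0 \<le> \<beta> k \<and> \<beta> k \<le> 1"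
    and "prod_dominated I \<alpha> I' \<beta>"
  shows "majorized_on (cube I) (prod_coin I \<alpha>) (cube I') (prod_coin I' \<beta>)"
  using assms
proof (induction "card I" arbitrary: I I' \<alpha> \<beta>)
  case 0
  then have "I = {}" "I' = {}" by auto
  moreover have "prod_coin {} \<alpha> = prod_coin {} \<beta>" by (simp add: prod_coin_def fun_eq_iff)
  ultimately show ?case by (simp add: majorized_on_refl)
next
  case (Suc n)
  have "I \<noteq> {}" "I' \<noteq> {}" using Suc.hyps(2) Suc.prems(3) by auto
  obtain i where i: "i \<in> I" "\<forall>k\<in>I. \<alpha> k \<le> \<alpha> i"
    using finite_obtain_max[OF Suc.prems(1) \<open>I \<noteq> {}\<close>, where f = \<alpha>] by blast
  obtain j where j: "j \<in> I'" "\<forall>t\<in>I'. \<beta> t \<le> \<beta> j"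
    using finite_obtain_max[OF Suc.prems(2) \<open>I' \<noteq> {}\<close>, where f = \<beta>] by blast
  have IH: "majorized_on (cube (I - {i})) (prod_coin (I - {i}) \<alpha>) (cube (I' - {j})) (prod_coin (I' - {j}) \<gamma>)"
    if "\<forall>k\<in>I' - {j}. 0 \<le> \<gamma> k \<and> \<gamma> k \<le> 1" "prod_dominated (I - {i}) \<alpha> (I' - {j}) \<gamma>" for \<gamma>
  proof (rule Suc.hyps(1))
    show "n = card (I - {i})" "card (I - {i}) = card (I' - {j})"
      using Suc.hyps(2) Suc.prems(1-3) i(1) j(1) by simp_all
  qed (use Suc.prems(1,2,4) that in simp_all)
  obtain t where "t \<in> I'" "\<alpha> i \<le> \<beta> t" using prod_dominated_singleton[OF Suc.prems(6) i(1)] ..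
  then have "\<alpha> i \<le> \<beta> j" using j(2) by force
  consider (above) "\<forall>t\<in>I' - {j}. \<alpha> i \<le> \<beta> t"
    | (below) m where "m \<in> I' - {j}" "\<beta> m < \<alpha> i" "\<forall>t\<in>I' - {j}. \<beta> t < \<alpha> i \<longrightarrow> \<beta> t \<le> \<beta> m"
  proof (cases "\<forall>t\<in>I' - {j}. \<alpha> i \<le> \<beta> t")
    case False
    then have "{t\<in>I' - {j}. \<beta> t < \<alpha> i} \<noteq> {}" by auto
    moreover have "finite {t\<in>I' - {j}. \<beta> t < \<alpha> i}" using Suc.prems(2) by simp
    ultimately obtain m where "m \<in> {t\<in>I' - {j}. \<beta> t < \<alpha> i}" "\<forall>t\<in>{t\<in>I' - {j}. \<beta> t < \<alpha> i}. \<beta> t \<le> \<beta> m"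
      using finite_obtain_max[where f = \<beta>] by blast
    then show ?thesis using that(2) by blast
  qed (rule that(1))
  then show ?case
  proof cases
    case above
    have "prod_dominated (I - {i}) \<alpha> (I' - {j}) \<beta>"
      using above Suc.prems(1,3-5) i j(1) by (intro prod_dominated_if_bounded[where a = "\<alpha> i"]) auto
    then have rest: "majorized_on (cube (I - {i})) (prod_coin (I - {i}) \<alpha>) (cube (I' - {j})) (prod_coin (I' - {j}) \<beta>)"
      using IH Suc.prems(5) by simp
    have coin: "majorized_on UNIV (coin (\<alpha> i)) UNIV (coin (\<beta> j))"
      using Suc.prems(4) i(1) \<open>\<alpha> i \<le> \<beta> j\<close> by (intro majorized_on_coin) auto
    show ?thesis by (rule majorized_on_prod_coin_insert[OF Suc.prems(1,2) i(1) j(1) Suc.prems(4,5) coin rest])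
  next
    case below
    then show ?thesis
      using majorized_on_prod_coin_step_below[OF Suc.prems(1,2,4) i Suc.prems(5) j \<open>\<alpha> i \<le> \<beta> j\<close> _ _ _ Suc.prems(6) IH]
      by blast
  qed
qed

theorem lemma4:
  fixes n :: nat and \<alpha> \<beta> :: "nat \<Rightarrow> real"
  assumes "\<forall>j<n. 0 \<le> \<alpha> j \<and> \<alpha> j \<le> 1"
      and "\<forall>j<n. 0 \<le> \<beta> j \<and> \<beta> j \<le> 1"
      and "\<forall>i j. i \<le> j \<and> j < n \<longrightarrow> \<alpha> j \<le> \<alpha> i"
      and "\<forall>i j. i \<le> j \<and> j < n \<longrightarrow> \<beta> j \<le> \<beta> i"
      and "\<forall>k \<in> {1..n}. (\<Prod>j<k. \<alpha> j) \<le> (\<Prod>j<k. \<beta> j)"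
      and "(\<Prod>j<n. \<alpha> j) = (\<Prod>j<n. \<beta> j)"
  shows "majorized_dist n (prod_dist n \<alpha>) (prod_dist n \<beta>)"
proof -
  have "prod_dominated {..<n} \<alpha> {..<n} \<beta>"
    using assms(1,3,5) by (intro prod_dominated_if_sorted) auto
  then have "majorized_on (cube {..<n}) (prod_coin {..<n} \<alpha>) (cube {..<n}) (prod_coin {..<n} \<beta>)"
    using assms(1,2) by (intro majorized_on_prod_coin) auto
  then have "majorized_on (set (cube_points n)) (prod_dist n \<alpha>) (set (cube_points n)) (prod_dist n \<beta>)"
    by (rule majorized_on_bij_betw[OF _ bij_betw_cube_cube_points bij_betw_cube_cube_points])
      (simp_all add: prod_dist_map)
  moreover have "distinct (cube_points n)" unfolding cube_points_def by (rule distinct_n_lists) simp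
  ultimately show ?thesis unfolding majorized_dist_def by (rule majorized_if_majorized_on[rotated])
qed

end
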